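(* Let $n,d,a$ be positive integers and $p$ a prime. Suppose that every point $Q\in\mathcal{V}_d\subseteq\mathbb{C}^n$ with $\mathcal{P}_1(Q)=0$ is $p$-symmetric. Let $g:=\gcd(d,n)$ and assume $p\mid g$. Then $(n,d,a)$ is bad if and only if $g\nmid a$.
   Context: $\mathcal{V}_d=\{(z_1,\dots,z_n)\in\mathbb{C}^n: z_i^d=1\ \forall i,\ z_n=1\}$ and $\mathcal{P}_1=x_1+\dots+x_n$. A point $Q=(z_1,\dots,z_n)$ whose coordinates are $d$-th roots of unity is $v$-symmetric if, for a primitive $v$-th root of unity $\epsilon$, there is a permutation $\tau\in\mathfrak{S}_n$ with $(\epsilon z_1,\dots,\epsilon z_n)=(z_{\tau(1)},\dots,z_{\tau(n)})$. Let $R=\mathbb{C}[x_1,\dots,x_n]$, and $R_a^{\mathfrak{S}_n}$ the symmetric polynomials homogeneous of degree $a$. A triple $(n,d,a)$ is good if there exists $f\in R_a^{\mathfrak{S}_n}$ such that $x_1^d-x_n^d,\dots,x_{n-1}^d-x_n^d,f$ is a regular sequence (equivalently, $f$ has no zero on $\mathcal{V}_d$); otherwise it is bad. *)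

theory Defs
  imports Complex_Main "HOL-Combinatorics.Permutations" "HOL-Computational_Algebra.Primes"
begin

text \<open>Points of C^n are functions z :: nat => complex, coordinate z_i (i = 1..n)
  being z (i-1); only indices below n matter.  Multivariate polynomials in
  x_1..x_n are represented by their coefficient functions on exponent vectors
  alpha :: nat => nat (alpha i = exponent of x_(i+1), zero for i >= n).\<close>

definition V :: "nat \<Rightarrow> nat \<Rightarrow> (nat \<Rightarrow> complex) set" where
  "V d n = {z. (\<forall>i<n. z i ^ d = 1) \<and> z (n - 1) = 1}"

definition P1 :: "nat \<Rightarrow> (nat \<Rightarrow> complex) \<Rightarrow> complex" where
  "P1 n z = (\<Sum>i<n. z i)"

definition primitive_root :: "nat \<Rightarrow> complex \<Rightarrow> bool" where
  "primitive_root v e \<longleftrightarrow> e ^ v = 1 \<and> (\<forall>k. 0 < k \<and> k < v \<longrightarrow> e ^ k \<noteq> 1)"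

definition v_symmetric :: "nat \<Rightarrow> nat \<Rightarrow> (nat \<Rightarrow> complex) \<Rightarrow> bool" where
  "v_symmetric n v z \<longleftrightarrow>
     (\<exists>e. primitive_root v e \<and> (\<exists>\<tau>. \<tau> permutes {..<n} \<and> (\<forall>i<n. e * z i = z (\<tau> i))))"

definition mon_exps :: "nat \<Rightarrow> nat \<Rightarrow> (nat \<Rightarrow> nat) set" where
  "mon_exps n a = {\<alpha>. (\<forall>i\<ge>n. \<alpha> i = 0) \<and> (\<Sum>i<n. \<alpha> i) = a}"

definition sym_hom_poly :: "nat \<Rightarrow> nat \<Rightarrow> ((nat \<Rightarrow> nat) \<Rightarrow> complex) \<Rightarrow> bool" where
  "sym_hom_poly n a f \<longleftrightarrow>
     (\<forall>\<alpha>. \<alpha> \<notin> mon_exps n a \<longrightarrow> f \<alpha> = 0) \<and>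
     (\<forall>\<sigma> \<alpha>. \<sigma> permutes {..<n} \<longrightarrow> f (\<alpha> \<circ> \<sigma>) = f \<alpha>)"

definition hom_eval :: "nat \<Rightarrow> nat \<Rightarrow> ((nat \<Rightarrow> nat) \<Rightarrow> complex) \<Rightarrow> (nat \<Rightarrow> complex) \<Rightarrow> complex" where
  "hom_eval n a f z = (\<Sum>\<alpha>\<in>mon_exps n a. f \<alpha> * (\<Prod>i<n. z i ^ \<alpha> i))"

definition good :: "nat \<Rightarrow> nat \<Rightarrow> nat \<Rightarrow> bool" where
  "good n d a \<longleftrightarrow> (\<exists>f. sym_hom_poly n a f \<and> (\<forall>z\<in>V d n. hom_eval n a f z \<noteq> 0))"

definition bad :: "nat \<Rightarrow> nat \<Rightarrow> nat \<Rightarrow> bool" where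
  "bad n d a \<longleftrightarrow> \<not> good n d a"

end

theory Submission
  imports Defs "HOL-Library.FuncSet" "HOL-Computational_Algebra.Polynomial"
begin

text \<open>Let \<open>g = gcd d n\<close>. If \<open>g\<close> does not divide \<open>a\<close>, multiplication by a primitive \<open>g\<close>-th root
  of unity \<open>\<zeta>\<close> permutes the coordinates of \<open>(\<zeta>, \<zeta>^2, \<dots>, \<zeta>^n) \<in> V d n\<close>, so every symmetric \<open>f\<close>
  of degree \<open>a\<close> satisfies \<open>f = \<zeta>^a * f\<close> there and vanishes.

  Conversely, at every point \<open>z\<close> of \<open>V d n\<close> some power sum \<open>\<Sum>i<n. z i ^ p ^ k\<close> with
  \<open>p ^ k dvd g\<close> is nonzero. Otherwise each \<open>z ^ p ^ j\<close> is a zero-sum point, hence \<open>p\<close>-symmetric,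
  and multiplying it by a primitive \<open>p\<close>-th root permutes its coordinates; so raising it to the
  \<open>p\<close>-th power multiplies all coordinate multiplicities by \<open>p\<close>, and by induction \<open>p ^ j dvd g\<close>
  for all \<open>j\<close>, which is absurd. The polynomials \<open>(\<Sum>i<n. x i ^ p ^ k) ^ (a div p ^ k)\<close> are
  symmetric of degree \<open>a\<close>, and a generic linear combination of them has no zero on the finite
  set \<open>V d n\<close>.\<close>

section \<open>Symmetric homogeneous polynomials\<close>

lemma finite_mon_exps: "finite (mon_exps n a)"
proof (rule finite_subset)
  show "mon_exps n a \<subseteq> (\<lambda>w i. if i < n then w i else 0) ` ({..<n} \<rightarrow>\<^sub>E {..a})"
  proof
    fix \<alpha> assume "\<alpha> \<in> mon_exps n a"
    hence zero: "\<forall>i\<ge>n. \<alpha> i = 0" and total: "(\<Sum>i<n. \<alpha> i) = a" by (auto simp: mon_exps_def)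
    have "\<alpha> i \<le> a" if "i < n" for i
      using total that member_le_sum[of i "{..<n}" \<alpha>] by auto
    then show "\<alpha> \<in> (\<lambda>w i. if i < n then w i else 0) ` ({..<n} \<rightarrow>\<^sub>E {..a})"
      by (intro image_eqI[where x="restrict \<alpha> {..<n}"]) (use zero in \<open>auto simp: fun_eq_iff\<close>)
  qed
qed (auto intro: finite_PiE)

lemma mon_exps_permute:
  assumes "\<sigma> permutes {..<n}"
  shows "\<alpha> \<circ> \<sigma> \<in> mon_exps n a \<longleftrightarrow> \<alpha> \<in> mon_exps n a"
  using permutes_not_in[OF assms] sum.permute[OF assms, of \<alpha>] by (auto simp: mon_exps_def)

lemma hom_eval_permute:
  assumes f: "sym_hom_poly n a f" and \<tau>: "\<tau> permutes {..<n}" and w: "\<And>i. i < n \<Longrightarrow> w i = z (\<tau> i)"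
  shows "hom_eval n a f w = hom_eval n a f z"
proof -
  have inv\<tau>: "inv \<tau> permutes {..<n}" using \<tau> by (rule permutes_inv)
  have "hom_eval n a f w = (\<Sum>\<alpha>\<in>mon_exps n a. f \<alpha> * (\<Prod>j<n. z j ^ \<alpha> (inv \<tau> j)))"
    unfolding hom_eval_def
  proof (rule sum.cong[OF refl])
    fix \<alpha>
    have "(\<Prod>j<n. z j ^ \<alpha> (inv \<tau> j)) = (\<Prod>i<n. z (\<tau> i) ^ \<alpha> (inv \<tau> (\<tau> i)))"
      using prod.permute[OF \<tau>, of "\<lambda>j. z j ^ \<alpha> (inv \<tau> j)"] by (simp add: comp_def)
    also have "\<dots> = (\<Prod>i<n. w i ^ \<alpha> i)"
      using w permutes_inverses(2)[OF \<tau>] by simp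
    finally show "f \<alpha> * (\<Prod>i<n. w i ^ \<alpha> i) = f \<alpha> * (\<Prod>j<n. z j ^ \<alpha> (inv \<tau> j))" by simp
  qed
  also have "\<dots> = hom_eval n a f z"
    unfolding hom_eval_def
  proof (rule sum.reindex_bij_witness[where i="\<lambda>\<beta>. \<beta> \<circ> \<tau>" and j="\<lambda>\<alpha>. \<alpha> \<circ> inv \<tau>"])
    fix \<alpha> assume \<alpha>: "\<alpha> \<in> mon_exps n a"
    show "\<alpha> \<circ> inv \<tau> \<circ> \<tau> = \<alpha>" using permutes_inv_o(2)[OF \<tau>] by (simp add: comp_assoc)
    show "\<alpha> \<circ> inv \<tau> \<in> mon_exps n a" using \<alpha> mon_exps_permute[OF inv\<tau>] by simp
    show "f (\<alpha> \<circ> inv \<tau>) * (\<Prod>i<n. z i ^ (\<alpha> \<circ> inv \<tau>) i) = f \<alpha> * (\<Prod>j<n. z j ^ \<alpha> (inv \<tau> j))"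
      using f inv\<tau> by (simp add: sym_hom_poly_def)
  next
    fix \<beta> assume \<beta>: "\<beta> \<in> mon_exps n a"
    show "\<beta> \<circ> \<tau> \<circ> inv \<tau> = \<beta>" using permutes_inv_o(1)[OF \<tau>] by (simp add: comp_assoc)
    show "\<beta> \<circ> \<tau> \<in> mon_exps n a" using \<beta> mon_exps_permute[OF \<tau>] by simp
  qed
  finally show ?thesis .
qed

lemma hom_eval_scale: "hom_eval n a f (\<lambda>i. c * z i) = c ^ a * hom_eval n a f z"
  unfolding hom_eval_def sum_distrib_left
proof (rule sum.cong[OF refl])
  fix \<alpha> assume "\<alpha> \<in> mon_exps n a"
  hence total: "(\<Sum>i<n. \<alpha> i) = a" by (simp add: mon_exps_def)
  have "(\<Prod>i<n. (c * z i) ^ \<alpha> i) = (\<Prod>i<n. c ^ \<alpha> i) * (\<Prod>i<n. z i ^ \<alpha> i)"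
    by (simp add: power_mult_distrib prod.distrib)
  also have "(\<Prod>i<n. c ^ \<alpha> i) = c ^ a" using total by (simp add: power_sum[symmetric])
  finally show "f \<alpha> * (\<Prod>i<n. (c * z i) ^ \<alpha> i) = c ^ a * (f \<alpha> * (\<Prod>i<n. z i ^ \<alpha> i))"
    by simp
qed

lemma hom_eval_restrict: "hom_eval n a f (restrict z {..<n}) = hom_eval n a f z"
  unfolding hom_eval_def by (intro sum.cong refl arg_cong2[where f="(*)"] prod.cong) auto

lemma hom_eval_lincomb:
  "hom_eval n a (\<lambda>\<alpha>. \<Sum>k\<in>K. c k * f k \<alpha>) z = (\<Sum>k\<in>K. c k * hom_eval n a (f k) z)"
proof -
  have "hom_eval n a (\<lambda>\<alpha>. \<Sum>k\<in>K. c k * f k \<alpha>) z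
      = (\<Sum>\<alpha>\<in>mon_exps n a. \<Sum>k\<in>K. c k * (f k \<alpha> * (\<Prod>i<n. z i ^ \<alpha> i)))"
    unfolding hom_eval_def by (simp add: sum_distrib_right mult.assoc)
  also have "\<dots> = (\<Sum>k\<in>K. c k * hom_eval n a (f k) z)"
    unfolding hom_eval_def by (subst sum.swap) (simp add: sum_distrib_left)
  finally show ?thesis .
qed

lemma sym_hom_poly_lincomb:
  assumes "\<And>k. k \<in> K \<Longrightarrow> sym_hom_poly n a (f k)"
  shows "sym_hom_poly n a (\<lambda>\<alpha>. \<Sum>k\<in>K. c k * f k \<alpha>)"
  using assms by (simp add: sym_hom_poly_def)

lemma symmetric_point_hom_eval_eq_0:
  assumes f: "sym_hom_poly n a f" and \<tau>: "\<tau> permutes {..<n}"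
    and rotate: "\<And>i. i < n \<Longrightarrow> c * z i = z (\<tau> i)" and "c ^ a \<noteq> 1"
  shows "hom_eval n a f z = 0"
proof -
  have "c ^ a * hom_eval n a f z = hom_eval n a f z"
    using hom_eval_permute[OF f \<tau>, of "\<lambda>i. c * z i" z] rotate by (simp add: hom_eval_scale)
  with \<open>c ^ a \<noteq> 1\<close> show ?thesis by (metis mult_cancel_right1)
qed

section \<open>Primitive roots of unity\<close>

lemma primitive_root_nonzero: "primitive_root p e \<Longrightarrow> 0 < p \<Longrightarrow> e \<noteq> 0"
  by (auto simp: primitive_root_def power_0_left)

lemma primitive_root_power_eq_1_iff:
  assumes e: "primitive_root p e" and p: "0 < p"
  shows "e ^ k = 1 \<longleftrightarrow> p dvd k"
proof
  have "e ^ k = (e ^ p) ^ (k div p) * e ^ (k mod p)"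
    by (metis div_mult_mod_eq power_add power_mult mult.commute)
  also have "\<dots> = e ^ (k mod p)" using e by (simp add: primitive_root_def)
  finally show "e ^ k = 1 \<Longrightarrow> p dvd k"
    using e p by (auto simp: primitive_root_def mod_eq_0_iff_dvd[symmetric])
qed (use e in \<open>auto simp: primitive_root_def power_mult\<close>)

lemma primitive_root_power_inj:
  assumes e: "primitive_root p e"
  shows "inj_on (\<lambda>r. e ^ r) {..<p}"
proof -
  have no_collision: "False" if "r < s" "s < p" "e ^ r = e ^ s" for r s
  proof -
    have "e ^ s = e ^ r * e ^ (s - r)" using \<open>r < s\<close> by (simp add: power_add[symmetric])
    hence "e ^ (s - r) = 1"
      using that primitive_root_nonzero[OF e] by simp
    thus False using e that by (auto simp: primitive_root_def)
  qed
  show ?thesis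
  proof (rule inj_onI)
    fix r s assume "r \<in> {..<p}" "s \<in> {..<p}" "e ^ r = e ^ s"
    then show "r = s" using no_collision[of r s] no_collision[of s r] by (cases r s rule: linorder_cases) auto
  qed
qed

lemma primitive_root_powers:
  assumes e: "primitive_root p e" and p: "0 < p"
  shows "(\<lambda>r. e ^ r) ` {..<p} = {y. y ^ p = 1}"
proof (rule card_subset_eq)
  show "finite {y::complex. y ^ p = 1}" using p by (intro finite_roots_unity) simp
  show "(\<lambda>r. e ^ r) ` {..<p} \<subseteq> {y. y ^ p = 1}"
    using primitive_root_power_eq_1_iff[OF e p] by (auto simp: power_mult[symmetric])
  show "card ((\<lambda>r. e ^ r) ` {..<p}) = card {y::complex. y ^ p = 1}"
    using primitive_root_power_inj[OF e] card_roots_unity_eq[OF p] by (simp add: card_image)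
qed

lemma primitive_root_cis: "0 < g \<Longrightarrow> primitive_root g (cis (2 * pi / real g))"
proof -
  assume g: "0 < g"
  have power: "cis (2 * pi / real g) ^ k = cis (2 * pi * real k / real g)" for k
    by (simp add: DeMoivre field_simps)
  have inj: "inj_on (\<lambda>k. cis (2 * pi * real k / real g)) {..<g}"
    using bij_betw_roots_unity[OF g] by (simp add: bij_betw_def)
  have "cis (2 * pi * real k / real g) \<noteq> cis (2 * pi * real 0 / real g)" if "0 < k" "k < g" for k
    using inj_onD[OF inj, of k 0] that by auto
  moreover have "cis (2 * pi * real g / real g) = 1" using g by simp
  ultimately show ?thesis by (auto simp: primitive_root_def power)
qed

section \<open>Coordinate multiplicities of symmetric points\<close>

definition coord_count :: "nat \<Rightarrow> (nat \<Rightarrow> 'a) \<Rightarrow> 'a \<Rightarrow> nat" where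
  "coord_count n v x = card {l\<in>{..<n}. v l = x}"

lemma coord_count_eq_sum: "coord_count n v x = (\<Sum>l<n. if v l = x then 1 else 0)"
  by (simp add: coord_count_def sum.If_cases Int_def)

lemma dvd_if_dvd_coord_count:
  assumes "\<And>i. i < n \<Longrightarrow> m dvd coord_count n v (v i)"
  shows "m dvd n"
proof -
  have "n = (\<Sum>y\<in>v ` {..<n}. \<Sum>l\<in>{l\<in>{..<n}. v l = y}. 1::nat)"
    using sum.group[of "{..<n}" "v ` {..<n}" v "\<lambda>_. 1::nat"] by simp
  also have "\<dots> = (\<Sum>y\<in>v ` {..<n}. coord_count n v y)" by (simp add: coord_count_def)
  finally have "n = \<dots>" .
  moreover have "m dvd (\<Sum>y\<in>v ` {..<n}. coord_count n v y)"
    by (rule dvd_sum) (use assms in auto)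
  ultimately show ?thesis by simp
qed

lemma coord_count_mult:
  fixes v :: "nat \<Rightarrow> 'a :: idom"
  assumes \<tau>: "\<tau> permutes {..<n}" and rotate: "\<And>i. i < n \<Longrightarrow> c * v i = v (\<tau> i)" and "c \<noteq> 0"
  shows "coord_count n v (c * x) = coord_count n v x"
proof -
  have "coord_count n v (c * x) = (\<Sum>l<n. if v (\<tau> l) = c * x then 1 else 0)"
    unfolding coord_count_eq_sum using sum.permute[OF \<tau>] by (simp add: comp_def)
  also have "\<dots> = (\<Sum>l<n. if v l = x then 1 else 0)"
    using rotate[symmetric] \<open>c \<noteq> 0\<close> by (intro sum.cong) auto
  finally show ?thesis by (simp add: coord_count_eq_sum)
qed

lemma coord_count_power:
  assumes e: "primitive_root p e" and p: "0 < p" and "x \<noteq> 0"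
  shows "coord_count n (\<lambda>i. v i ^ p) (x ^ p) = (\<Sum>r<p. coord_count n v (e ^ r * x))"
proof -
  have root: "y ^ p = x ^ p \<longleftrightarrow> (\<exists>r<p. y = e ^ r * x)" for y
  proof -
    have "y ^ p = x ^ p \<longleftrightarrow> (y / x) ^ p = 1" using \<open>x \<noteq> 0\<close> by (simp add: power_divide)
    also have "\<dots> \<longleftrightarrow> (\<exists>r<p. y / x = e ^ r)"
      using primitive_root_powers[OF e p] by (auto simp: set_eq_iff image_iff)
    finally show ?thesis using \<open>x \<noteq> 0\<close> by (simp add: field_simps)
  qed
  have "{l\<in>{..<n}. v l ^ p = x ^ p} = (\<Union>r<p. {l\<in>{..<n}. v l = e ^ r * x})"
    by (auto simp: root)
  then have "coord_count n (\<lambda>i. v i ^ p) (x ^ p) = card (\<Union>r<p. {l\<in>{..<n}. v l = e ^ r * x})"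
    by (simp add: coord_count_def)
  also have "\<dots> = (\<Sum>r<p. coord_count n v (e ^ r * x))"
    unfolding coord_count_def
  proof (rule card_UN_disjoint)
    have "e ^ r * x \<noteq> e ^ s * x" if "r < p" "s < p" "r \<noteq> s" for r s
      using primitive_root_power_inj[OF e] that \<open>x \<noteq> 0\<close> by (auto simp: inj_on_def)
    then show "\<forall>r\<in>{..<p}. \<forall>s\<in>{..<p}. r \<noteq> s \<longrightarrow>
        {l\<in>{..<n}. v l = e ^ r * x} \<inter> {l\<in>{..<n}. v l = e ^ s * x} = {}" by auto
  qed auto
  finally show ?thesis .
qed

lemma v_symmetric_coord_count_power:
  assumes "v_symmetric n p v" and "0 < p" and "x \<noteq> 0"
  shows "coord_count n (\<lambda>i. v i ^ p) (x ^ p) = p * coord_count n v x"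
proof -
  obtain e \<tau> where e: "primitive_root p e" and \<tau>: "\<tau> permutes {..<n}"
    and rotate: "\<forall>i<n. e * v i = v (\<tau> i)"
    using assms(1) by (auto simp: v_symmetric_def)
  have count_mult_e: "coord_count n v (e * y) = coord_count n v y" for y
    by (rule coord_count_mult[OF \<tau>]) (use rotate primitive_root_nonzero[OF e \<open>0 < p\<close>] in auto)
  have "coord_count n v (e ^ r * x) = coord_count n v x" for r
    by (induction r) (simp_all add: mult.assoc count_mult_e)
  then show ?thesis using coord_count_power[OF e assms(2,3)] by simp
qed

lemma v_symmetric_dvd_exponent:
  assumes "v_symmetric n p v" and "0 < n" and "0 < p" and "\<And>i. i < n \<Longrightarrow> v i ^ k = 1"
  shows "p dvd k"
proof -
  obtain e \<tau> where e: "primitive_root p e" and \<tau>: "\<tau> permutes {..<n}"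
    and rotate: "\<forall>i<n. e * v i = v (\<tau> i)"
    using assms(1) by (auto simp: v_symmetric_def)
  have "e ^ k = (e * v 0) ^ k" using assms(2,4) by (simp add: power_mult_distrib)
  also have "\<dots> = 1" using rotate assms(2,4) permutes_in_image[OF \<tau>] by simp
  finally show ?thesis using primitive_root_power_eq_1_iff[OF e \<open>0 < p\<close>] by simp
qed

lemma exists_power_sum_nonzero:
  fixes z :: "nat \<Rightarrow> complex"
  assumes "0 < n" and "0 < d" and "1 < p"
    and sym: "\<forall>Q\<in>V d n. P1 n Q = 0 \<longrightarrow> v_symmetric n p Q"
    and z: "z \<in> V d n"
  shows "\<exists>k. p ^ k dvd gcd d n \<and> P1 n (\<lambda>i. z i ^ p ^ k) \<noteq> 0"
proof (rule ccontr)
  assume "\<not> ?thesis"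
  then have vanish: "P1 n (\<lambda>i. z i ^ p ^ k) = 0" if "p ^ k dvd gcd d n" for k
    using that by blast
  have unit: "z i ^ d = 1" if "i < n" for i using z that by (simp add: V_def)
  have nonzero: "z i \<noteq> 0" if "i < n" for i using unit[OF that] \<open>0 < d\<close> by (auto simp: power_0_left)
  have "p ^ j dvd gcd d n \<and> (\<forall>i<n. p ^ j dvd coord_count n (\<lambda>l. z l ^ p ^ j) (z i ^ p ^ j))" for j
  proof (induction j)
    case (Suc j)
    define u where "u = (\<lambda>i. z i ^ p ^ j)"
    have "u \<in> V d n"
      using z unit by (simp add: V_def u_def power_mult[symmetric] mult.commute) (simp add: power_mult)
    moreover have "P1 n u = 0" using vanish Suc.IH by (simp add: u_def)
    ultimately have sym_u: "v_symmetric n p u" using sym by blast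
    obtain d' where d': "d = p ^ j * d'" using Suc.IH by (meson dvd_gcdD1 dvdE)
    have "p dvd d'"
      by (rule v_symmetric_dvd_exponent[OF sym_u \<open>0 < n\<close>])
        (use \<open>1 < p\<close> unit d' in \<open>simp_all add: u_def power_mult[symmetric]\<close>)
    then have "p ^ Suc j dvd d" using d' by (simp add: mult_dvd_mono mult.commute)
    moreover have counts: "p ^ Suc j dvd coord_count n (\<lambda>l. z l ^ p ^ Suc j) (z i ^ p ^ Suc j)"
      if "i < n" for i
    proof -
      have "z l ^ p ^ Suc j = u l ^ p" for l by (simp add: u_def power_mult[symmetric] mult.commute)
      then have "coord_count n (\<lambda>l. z l ^ p ^ Suc j) (z i ^ p ^ Suc j) = p * coord_count n u (u i)"
        using v_symmetric_coord_count_power[OF sym_u, of "u i"] \<open>1 < p\<close> nonzero[OF that]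
        by (simp add: u_def)
      then show ?thesis using Suc.IH that by (simp add: u_def mult_dvd_mono)
    qed
    moreover have "p ^ Suc j dvd n" using counts by (rule dvd_if_dvd_coord_count)
    ultimately show ?case by simp
  qed simp
  then have "p ^ gcd d n dvd gcd d n" by blast
  then have "p ^ gcd d n \<le> gcd d n" using \<open>0 < n\<close> by (simp add: dvd_imp_le)
  moreover have "gcd d n < 2 ^ gcd d n" by (rule less_exp)
  moreover have "(2::nat) ^ gcd d n \<le> p ^ gcd d n" using \<open>1 < p\<close> by (simp add: power_mono)
  ultimately show False by simp
qed

section \<open>Powers of power sums\<close>

text \<open>Expanding \<open>(\<Sum>i<n. x i ^ m) ^ e\<close> gives one monomial \<open>\<Prod>k<e. x (s k) ^ m\<close> per word
  \<open>s \<in> {..<e} \<rightarrow> {..<n}\<close>; \<open>word_exps m e s\<close> is its exponent vector, so the coefficient of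
  \<open>\<Prod>i<n. x i ^ \<gamma> i\<close> counts the words with exponent vector \<open>\<gamma>\<close>.\<close>
definition word_exps :: "nat \<Rightarrow> nat \<Rightarrow> (nat \<Rightarrow> nat) \<Rightarrow> nat \<Rightarrow> nat" where
  "word_exps m e s i = m * card {k\<in>{..<e}. s k = i}"

definition power_sum_power :: "nat \<Rightarrow> nat \<Rightarrow> nat \<Rightarrow> (nat \<Rightarrow> nat) \<Rightarrow> complex" where
  "power_sum_power n m e \<gamma> = of_nat (card {s \<in> {..<e} \<rightarrow>\<^sub>E {..<n}. word_exps m e s = \<gamma>})"

lemma word_exps_mem_mon_exps:
  assumes s: "s \<in> {..<e} \<rightarrow>\<^sub>E {..<n}"
  shows "word_exps m e s \<in> mon_exps n (m * e)"
proof -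
  have "(\<Sum>i<n. card {k\<in>{..<e}. s k = i}) = e"
    using s sum.group[of "{..<e}" "{..<n}" s "\<lambda>_. 1::nat"] by auto
  then have "(\<Sum>i<n. word_exps m e s i) = m * e" by (simp add: word_exps_def sum_distrib_left[symmetric])
  moreover have "word_exps m e s i = 0" if "n \<le> i" for i
    using s that by (auto simp: word_exps_def PiE_def Pi_def)
  ultimately show ?thesis by (simp add: mon_exps_def)
qed

lemma prod_power_word_exps:
  assumes s: "s \<in> {..<e} \<rightarrow>\<^sub>E {..<n}"
  shows "(\<Prod>i<n. z i ^ word_exps m e s i) = (\<Prod>k<e. z (s k) ^ m)"
proof -
  have "z i ^ word_exps m e s i = (\<Prod>k\<in>{k\<in>{..<e}. s k = i}. z (s k) ^ m)" for i
    by (simp add: word_exps_def power_mult[symmetric] mult.commute)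
  then have "(\<Prod>i<n. z i ^ word_exps m e s i) = (\<Prod>i<n. \<Prod>k\<in>{k\<in>{..<e}. s k = i}. z (s k) ^ m)"
    by simp
  also have "\<dots> = (\<Prod>k<e. z (s k) ^ m)" using s by (intro prod.group) auto
  finally show ?thesis .
qed

lemma card_word_exps_permute_le:
  assumes \<sigma>: "\<sigma> permutes {..<n}"
  shows "card {s \<in> {..<e} \<rightarrow>\<^sub>E {..<n}. word_exps m e s = \<gamma> \<circ> \<sigma>}
    \<le> card {s \<in> {..<e} \<rightarrow>\<^sub>E {..<n}. word_exps m e s = \<gamma>}"
proof (rule card_inj_on_le)
  define h where "h s = restrict (\<sigma> \<circ> s) {..<e}" for s :: "nat \<Rightarrow> nat"
  have "{k\<in>{..<e}. h s k = i} = {k\<in>{..<e}. s k = inv \<sigma> i}" for s i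
    unfolding h_def using permutes_inverses[OF \<sigma>] by auto
  then have word_exps_h: "word_exps m e (h s) = word_exps m e s \<circ> inv \<sigma>" for s
    by (simp add: word_exps_def fun_eq_iff)
  show "inj_on h {s \<in> {..<e} \<rightarrow>\<^sub>E {..<n}. word_exps m e s = \<gamma> \<circ> \<sigma>}"
  proof (rule inj_onI)
    fix s t assume s: "s \<in> {s \<in> {..<e} \<rightarrow>\<^sub>E {..<n}. word_exps m e s = \<gamma> \<circ> \<sigma>}"
      and t: "t \<in> {s \<in> {..<e} \<rightarrow>\<^sub>E {..<n}. word_exps m e s = \<gamma> \<circ> \<sigma>}" and "h s = h t"
    have "\<sigma> (s k) = \<sigma> (t k)" if "k < e" for k
      using that fun_cong[OF \<open>h s = h t\<close>, of k] by (simp add: h_def restrict_apply')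
    then show "s = t"
      using s t permutes_inj[OF \<sigma>] by (auto simp: inj_eq intro: PiE_ext)
  qed
  show "h ` {s \<in> {..<e} \<rightarrow>\<^sub>E {..<n}. word_exps m e s = \<gamma> \<circ> \<sigma>}
      \<subseteq> {s \<in> {..<e} \<rightarrow>\<^sub>E {..<n}. word_exps m e s = \<gamma>}"
  proof (rule image_subsetI)
    fix s assume "s \<in> {s \<in> {..<e} \<rightarrow>\<^sub>E {..<n}. word_exps m e s = \<gamma> \<circ> \<sigma>}"
    then have s: "s \<in> {..<e} \<rightarrow>\<^sub>E {..<n}" and ws: "word_exps m e s = \<gamma> \<circ> \<sigma>" by auto
    have "h s \<in> {..<e} \<rightarrow>\<^sub>E {..<n}"
      using s permutes_in_image[OF \<sigma>] by (auto simp: h_def PiE_def Pi_def)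
    moreover have "word_exps m e (h s) = \<gamma>"
      unfolding word_exps_h ws using permutes_inverses(1)[OF \<sigma>] by (simp add: fun_eq_iff)
    ultimately show "h s \<in> {s \<in> {..<e} \<rightarrow>\<^sub>E {..<n}. word_exps m e s = \<gamma>}" by simp
  qed
qed (simp add: finite_PiE)

lemma sym_hom_poly_power_sum_power: "sym_hom_poly n (m * e) (power_sum_power n m e)"
  unfolding sym_hom_poly_def
proof (intro conjI allI impI)
  fix \<alpha> assume "\<alpha> \<notin> mon_exps n (m * e)"
  then have "{s \<in> {..<e} \<rightarrow>\<^sub>E {..<n}. word_exps m e s = \<alpha>} = {}"
    using word_exps_mem_mon_exps by blast
  then show "power_sum_power n m e \<alpha> = 0" unfolding power_sum_power_def by (metis card.empty of_nat_0)
next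
  fix \<sigma> \<alpha> :: "nat \<Rightarrow> nat" assume \<sigma>: "\<sigma> permutes {..<n}"
  have "\<alpha> \<circ> \<sigma> \<circ> inv \<sigma> = \<alpha>" using permutes_inv_o(1)[OF \<sigma>] by (simp add: comp_assoc)
  then show "power_sum_power n m e (\<alpha> \<circ> \<sigma>) = power_sum_power n m e \<alpha>"
    using card_word_exps_permute_le[OF \<sigma>, of e m \<alpha>]
      card_word_exps_permute_le[OF permutes_inv[OF \<sigma>], of e m "\<alpha> \<circ> \<sigma>"]
    by (simp add: power_sum_power_def)
qed

lemma hom_eval_power_sum_power:
  "hom_eval n (m * e) (power_sum_power n m e) z = P1 n (\<lambda>i. z i ^ m) ^ e"
proof -
  let ?W = "{..<e} \<rightarrow>\<^sub>E {..<n}"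
  have finite_W: "finite ?W" by (simp add: finite_PiE)
  have "hom_eval n (m * e) (power_sum_power n m e) z
      = (\<Sum>\<gamma>\<in>mon_exps n (m * e). of_nat (card {s\<in>?W. word_exps m e s = \<gamma>}) * (\<Prod>i<n. z i ^ \<gamma> i))"
    by (simp only: hom_eval_def power_sum_power_def)
  also have "\<dots> = (\<Sum>\<gamma>\<in>mon_exps n (m * e).
      \<Sum>s\<in>{s\<in>?W. word_exps m e s = \<gamma>}. \<Prod>i<n. z i ^ word_exps m e s i)"
  proof (rule sum.cong[OF refl])
    fix \<gamma>
    have "(\<Sum>s\<in>{s\<in>?W. word_exps m e s = \<gamma>}. \<Prod>i<n. z i ^ word_exps m e s i)
        = (\<Sum>s\<in>{s\<in>?W. word_exps m e s = \<gamma>}. \<Prod>i<n. z i ^ \<gamma> i)"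
      by (rule sum.cong) auto
    then show "of_nat (card {s\<in>?W. word_exps m e s = \<gamma>}) * (\<Prod>i<n. z i ^ \<gamma> i)
        = (\<Sum>s\<in>{s\<in>?W. word_exps m e s = \<gamma>}. \<Prod>i<n. z i ^ word_exps m e s i)"
      by simp
  qed
  also have "\<dots> = (\<Sum>s\<in>?W. \<Prod>i<n. z i ^ word_exps m e s i)"
    by (rule sum.group[OF finite_W finite_mon_exps]) (use word_exps_mem_mon_exps in blast)
  also have "\<dots> = (\<Sum>s\<in>?W. \<Prod>k<e. z (s k) ^ m)"
    by (rule sum.cong[OF refl]) (simp add: prod_power_word_exps)
  also have "\<dots> = (\<Prod>k<e. \<Sum>i<n. z i ^ m)"
    by (rule prod_sum_PiE[symmetric]) simp_all
  finally show ?thesis by (simp add: P1_def)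
qed

section \<open>Good and bad triples\<close>

text \<open>With \<open>F = \<Sum>k\<in>K. t ^ k * f k\<close>, the value of \<open>F\<close> at a point of \<open>V d n\<close> is a nonzero polynomial
  in \<open>t\<close>; since \<open>hom_eval\<close> only sees the first \<open>n\<close> coordinates, there are finitely many such
  polynomials, and any \<open>t\<close> avoiding all their roots works.\<close>
lemma good_if_covered:
  fixes f :: "nat \<Rightarrow> (nat \<Rightarrow> nat) \<Rightarrow> complex"
  assumes "0 < d" and "finite K" and sym: "\<And>k. k \<in> K \<Longrightarrow> sym_hom_poly n a (f k)"
    and covered: "\<And>z. z \<in> V d n \<Longrightarrow> \<exists>k\<in>K. hom_eval n a (f k) z \<noteq> 0"
  shows "good n d a"
proof -
  define q where "q z = (\<Sum>k\<in>K. monom (hom_eval n a (f k) z) k)" for z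
  have poly_q: "poly (q z) t = (\<Sum>k\<in>K. t ^ k * hom_eval n a (f k) z)" for z t
    by (simp add: q_def poly_sum poly_monom mult.commute)
  have q_nonzero: "q z \<noteq> 0" if z: "z \<in> V d n" for z
  proof
    obtain k where k: "k \<in> K" "hom_eval n a (f k) z \<noteq> 0" using covered[OF z] by blast
    have "coeff (q z) k = hom_eval n a (f k) z"
      using k(1) \<open>finite K\<close> by (simp add: q_def coeff_sum coeff_monom)
    moreover assume "q z = 0"
    ultimately show False using k(2) by simp
  qed
  define R where "R = (\<lambda>z. restrict z {..<n}) ` V d n"
  have "R \<subseteq> {..<n} \<rightarrow>\<^sub>E {w::complex. w ^ d = 1}"
    by (auto simp: R_def V_def PiE_def extensional_def)
  moreover have "finite ({..<n} \<rightarrow>\<^sub>E {w::complex. w ^ d = 1})"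
    using \<open>0 < d\<close> by (intro finite_PiE finite_roots_unity) auto
  ultimately have "finite R" by (rule finite_subset)
  have q_restrict: "q (restrict z {..<n}) = q z" for z by (simp add: q_def hom_eval_restrict)
  have "finite (\<Union>w\<in>R. {t. poly (q w) t = 0})"
  proof (rule finite_UN_I[OF \<open>finite R\<close>])
    fix w assume "w \<in> R"
    then have "q w \<noteq> 0" using q_nonzero q_restrict by (auto simp: R_def)
    then show "finite {t. poly (q w) t = 0}" by (rule poly_roots_finite)
  qed
  then obtain t where t: "t \<notin> (\<Union>w\<in>R. {t. poly (q w) t = 0})"
    using ex_new_if_finite[OF infinite_UNIV_char_0] by blast
  define F where "F \<alpha> = (\<Sum>k\<in>K. t ^ k * f k \<alpha>)" for \<alpha>
  have "hom_eval n a F z \<noteq> 0" if "z \<in> V d n" for z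
  proof -
    have "hom_eval n a F z = poly (q (restrict z {..<n})) t"
      unfolding F_def hom_eval_lincomb poly_q q_restrict ..
    then show ?thesis using t that by (auto simp: R_def)
  qed
  moreover have "sym_hom_poly n a F" unfolding F_def using sym by (rule sym_hom_poly_lincomb)
  ultimately show ?thesis by (auto simp: good_def)
qed

lemma good_if_gcd_dvd:
  assumes "0 < n" and "0 < d" and "prime p"
    and sym: "\<forall>Q\<in>V d n. P1 n Q = 0 \<longrightarrow> v_symmetric n p Q"
    and "gcd d n dvd a"
  shows "good n d a"
proof (rule good_if_covered)
  let ?K = "{k. p ^ k dvd gcd d n}"
  have "1 < p" using \<open>prime p\<close> by (rule prime_gt_1_nat)
  have "k < gcd d n" if "k \<in> ?K" for k
  proof -
    have "k < 2 ^ k" by (rule less_exp)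
    also have "\<dots> \<le> p ^ k" using \<open>1 < p\<close> by (simp add: power_mono)
    also have "\<dots> \<le> gcd d n" using that \<open>0 < n\<close> by (simp add: dvd_imp_le)
    finally show ?thesis .
  qed
  then show "finite ?K" by (meson finite_lessThan finite_subset lessThan_iff subsetI)
  have split_a: "a = p ^ k * (a div p ^ k)" if "k \<in> ?K" for k
    using that \<open>gcd d n dvd a\<close> by (metis dvd_mult_div_cancel dvd_trans mem_Collect_eq)
  show "sym_hom_poly n a (power_sum_power n (p ^ k) (a div p ^ k))" if "k \<in> ?K" for k
    using sym_hom_poly_power_sum_power split_a[OF that] by metis
  show "\<exists>k\<in>?K. hom_eval n a (power_sum_power n (p ^ k) (a div p ^ k)) z \<noteq> 0"
    if "z \<in> V d n" for z
    using exists_power_sum_nonzero[OF \<open>0 < n\<close> \<open>0 < d\<close> \<open>1 < p\<close> sym that]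
      hom_eval_power_sum_power split_a by (metis mem_Collect_eq power_not_zero)
qed fact

lemma cyclic_shift_permutes:
  "(\<lambda>i. if i < n then if Suc i = n then 0 else Suc i else i) permutes {..<n}"
  (is "?\<tau> permutes _")
proof (rule bij_imp_permutes)
  have "inj_on ?\<tau> {..<n}" by (auto simp: inj_on_def)
  moreover have "?\<tau> ` {..<n} = {..<n}"
    by (intro endo_inj_surj calculation) auto
  ultimately show "bij_betw ?\<tau> {..<n} {..<n}" by (simp add: bij_betw_def)
qed simp

lemma not_good_if_not_gcd_dvd:
  assumes "0 < n" and "\<not> gcd d n dvd a"
  shows "\<not> good n d a"
proof
  define g where "g = gcd d n"
  define \<zeta> where "\<zeta> = cis (2 * pi / real g)"
  define z where "z i = \<zeta> ^ Suc i" for i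
  define \<tau> where "\<tau> i = (if i < n then if Suc i = n then 0 else Suc i else i)" for i
  have "0 < g" using \<open>0 < n\<close> by (simp add: g_def)
  then have \<zeta>_power: "\<zeta> ^ k = 1 \<longleftrightarrow> g dvd k" for k
    unfolding \<zeta>_def by (intro primitive_root_power_eq_1_iff primitive_root_cis)
  have "z \<in> V d n"
  proof -
    have "z i ^ d = (\<zeta> ^ d) ^ Suc i" for i unfolding z_def by (metis power_mult mult.commute)
    then have "z i ^ d = 1" for i using \<zeta>_power[of d] by (simp add: g_def)
    moreover have "z (n - 1) = 1" using \<zeta>_power[of n] \<open>0 < n\<close> by (simp add: z_def g_def)
    ultimately show ?thesis by (simp add: V_def)
  qed
  have rotate: "\<zeta> * z i = z (\<tau> i)" if "i < n" for i
    using that \<zeta>_power[of n] by (auto simp: z_def \<tau>_def g_def)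
  assume "good n d a"
  then obtain f where f: "sym_hom_poly n a f" and nonzero: "\<forall>z\<in>V d n. hom_eval n a f z \<noteq> 0"
    by (auto simp: good_def)
  have "hom_eval n a f z = 0"
  proof (rule symmetric_point_hom_eval_eq_0[OF f])
    show "\<tau> permutes {..<n}" unfolding \<tau>_def by (rule cyclic_shift_permutes)
    show "\<zeta> * z i = z (\<tau> i)" if "i < n" for i using that by (rule rotate)
    show "\<zeta> ^ a \<noteq> 1" using \<zeta>_power[of a] assms(2) by (simp add: g_def)
  qed
  with nonzero \<open>z \<in> V d n\<close> show False by blast
qed

theorem proposition3p19:
  fixes n d a p :: nat
  assumes "0 < n" and "0 < d" and "0 < a" and "prime p"
    and "\<forall>Q\<in>V d n. P1 n Q = 0 \<longrightarrow> v_symmetric n p Q"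
    and "p dvd gcd d n"
  shows "bad n d a \<longleftrightarrow> \<not> (gcd d n dvd a)"
  using good_if_gcd_dvd[OF assms(1,2,4,5)] not_good_if_not_gcd_dvd[OF assms(1)]
  by (auto simp: bad_def)

end
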